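(* Let $\mathcal{F}$ be a finite family of constraints and $\mathcal{F}^\perp=\{g^\perp\mid g\in\mathcal{F}\}$. If $\mathcal{F}^\perp$ pins $\ell_0$ then $\mathcal{F}$ pins $\ell_0$. If $\mathcal{F}$ pins $\ell_0$ and no four constraints in $\mathcal{F}$ are dependent, then $\mathcal{F}^\perp$ pins $\ell_0$.
   Context: All lines are oriented. For non-parallel oriented lines $\ell_1,\ell_2$ with directions $d_1,d_2$, $\ell_2$ passes to the right of $\ell_1$ if $\ell_2$ can be translated by a positive multiple of $d_1\times d_2$ to meet $\ell_1$. Coordinates are chosen so that $\ell_0$ is the $z$-axis. A constraint is an oriented line meeting $\ell_0$ in exactly one point; a line satisfies a constraint $g$ if it meets $g$ or passes to the right of $g$. A family of constraints pins $\ell_0$ if there is a neighborhood of $\ell_0$ in the space of oriented lines in which $\ell_0$ is the only line satisfying all its constraints. $g(\lambda,\alpha,\delta)$ denotes the constraint through $(0,0,\lambda)$ and $(\cos\alpha,\sin\alpha,\lambda+\delta)$, oriented from the first to the second point (every constraint has this form). The orthogonalized constraint of $g=g(\lambda,\alpha,\delta)$ is $g^\perp=g(\lambda,\alpha,0)$ (the projection of $g$ onto the plane orthogonal to $\ell_0$ through $g\cap\ell_0$). The normal of $g(\lambda,\alpha,\delta)$ is $\eta_g=\big((1-\lambda)\sin\alpha,-(1-\lambda)\cos\alpha,\lambda\sin\alpha,-\lambda\cos\alpha\big)$; a family of constraints is dependent if their normals are linearly dependent. *)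

theory Defs
  imports "HOL-Analysis.Analysis" "HOL-Analysis.Cross3"
begin

text \<open>An oriented line in R^3 is represented by a pair (p, d): a point p on it and a
  nonzero direction vector d.\<close>

type_synonym oline = "(real^3) \<times> (real^3)"

definition is_oline :: "oline \<Rightarrow> bool" where
  "is_oline l \<longleftrightarrow> snd l \<noteq> 0"

definition same_oline :: "oline \<Rightarrow> oline \<Rightarrow> bool" where
  "same_oline l m \<longleftrightarrow> (\<exists>c>0. snd m = c *\<^sub>R snd l) \<and> (\<exists>t. fst m - fst l = t *\<^sub>R snd l)"

text \<open>Canonical representative: unit direction and the foot point closest to the origin.
  The topology on the space of oriented lines is the one induced by this embedding
  into R^3 x R^3.\<close>

definition canon :: "oline \<Rightarrow> oline" where
  "canon l = (let u = (1 / norm (snd l)) *\<^sub>R snd l in (fst l - (fst l \<bullet> u) *\<^sub>R u, u))"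

definition meets :: "oline \<Rightarrow> oline \<Rightarrow> bool" where
  "meets l m \<longleftrightarrow> (\<exists>s t. fst l + s *\<^sub>R snd l = fst m + t *\<^sub>R snd m)"

definition parallel :: "oline \<Rightarrow> oline \<Rightarrow> bool" where
  "parallel l m \<longleftrightarrow> cross3 (snd l) (snd m) = 0"

definition passes_right :: "oline \<Rightarrow> oline \<Rightarrow> bool" where
  "passes_right l2 l1 \<longleftrightarrow> \<not> parallel l1 l2 \<and>
     (\<exists>c>0. meets (fst l2 + c *\<^sub>R cross3 (snd l1) (snd l2), snd l2) l1)"

definition satisfies :: "oline \<Rightarrow> oline \<Rightarrow> bool" where
  "satisfies l g \<longleftrightarrow> meets l g \<or> passes_right l g"

definition ell0 :: oline where
  "ell0 = (0, vector [0, 0, 1])"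

definition pins :: "oline set \<Rightarrow> bool" where
  "pins G \<longleftrightarrow> (\<forall>g\<in>G. satisfies ell0 g) \<and>
     (\<exists>\<epsilon>>0. \<forall>l. is_oline l \<and> dist (canon l) (canon ell0) < \<epsilon> \<and> (\<forall>g\<in>G. satisfies l g)
              \<longrightarrow> same_oline l ell0)"

definition gcon :: "real \<times> real \<times> real \<Rightarrow> oline" where
  "gcon p = (case p of (lam, \<alpha>, \<delta>) \<Rightarrow>
     (vector [0, 0, lam], vector [cos \<alpha>, sin \<alpha>, \<delta>]))"

definition orth :: "real \<times> real \<times> real \<Rightarrow> real \<times> real \<times> real" where
  "orth p = (case p of (lam, \<alpha>, \<delta>) \<Rightarrow> (lam, \<alpha>, 0))"

definition normal :: "real \<times> real \<times> real \<Rightarrow> real^4" where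
  "normal p = (case p of (lam, \<alpha>, \<delta>) \<Rightarrow>
     vector [(1 - lam) * sin \<alpha>, -(1 - lam) * cos \<alpha>, lam * sin \<alpha>, -lam * cos \<alpha>])"

text \<open>A family of constraints is dependent if their normals are linearly dependent
  (as a family, so two members with equal normals make it dependent).\<close>

definition dependent_family :: "(real \<times> real \<times> real) set \<Rightarrow> bool" where
  "dependent_family S \<longleftrightarrow> \<not> (inj_on normal S \<and> independent (normal ` S))"

end

theory Submission
  imports Defs
begin

text \<open>Near ell0 a line is described by the points (y1, y2, 0) and (y3, y4, 1) where it
  crosses the planes z = 0 and z = 1. In these coordinates y the line satisfies the
  constraint g iff -(normal g \<bullet> y) + delta * (y1 y4 - y2 y3) \<ge> 0: a linear form
  given by the normal, plus a quadratic correction that vanishes for orthogonalized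
  constraints. If the orthogonalized family pins ell0, the cone of normals leaves no nonzero
  y with all normal g \<bullet> y \<le> 0; by compactness some normal g \<bullet> y is at least c |y|, which
  dominates the quadratic term for small y, so the family itself pins ell0. Conversely take
  y \<noteq> 0 with all normal g \<bullet> y \<le> 0. With at most three constraints one can choose such y
  of rank one, which kills the quadratic term. Otherwise the normals with normal g \<bullet> y = 0
  are independent, since four would span the whole space, so y can be pushed to a point
  where all normal g \<bullet> y < 0; along the ray through it the linear term dominates and the
  family does not pin ell0.\<close>

section \<open>Lines and constraints\<close>

lemma cross3_decomposition:
  fixes u v w :: "real^3"
  shows "(cross3 u v \<bullet> cross3 u v) *\<^sub>R w = (w \<bullet> cross3 v (cross3 u v)) *\<^sub>R u
     + (w \<bullet> cross3 (cross3 u v) u) *\<^sub>R v + (w \<bullet> cross3 u v) *\<^sub>R cross3 u v"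
  unfolding vec_eq_iff forall_3
  by (simp add: cross3_def inner_vec_def sum_3; algebra)

lemma meets_iff_triple_product:
  assumes "cross3 (snd m) (snd l) \<noteq> 0"
  shows "meets l m \<longleftrightarrow> (fst m - fst l) \<bullet> cross3 (snd m) (snd l) = 0"
proof
  assume "meets l m"
  then obtain s t where "fst l + s *\<^sub>R snd l = fst m + t *\<^sub>R snd m"
    unfolding meets_def by auto
  then have "fst m - fst l = s *\<^sub>R snd l - t *\<^sub>R snd m"
    by (simp add: algebra_simps)
  then show "(fst m - fst l) \<bullet> cross3 (snd m) (snd l) = 0"
    by (simp add: inner_diff_left dot_cross_self)
next
  define w where "w = fst m - fst l"
  define n where "n = cross3 (snd m) (snd l)"
  assume "(fst m - fst l) \<bullet> cross3 (snd m) (snd l) = 0"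
  then have decomp: "(n \<bullet> n) *\<^sub>R w
      = (w \<bullet> cross3 (snd l) n) *\<^sub>R snd m + (w \<bullet> cross3 n (snd m)) *\<^sub>R snd l"
    using cross3_decomposition[of "snd m" "snd l" w] unfolding w_def n_def by simp
  have "n \<bullet> n \<noteq> 0"
    using assms n_def by simp
  define s where "s = (w \<bullet> cross3 n (snd m)) / (n \<bullet> n)"
  define t where "t = - (w \<bullet> cross3 (snd l) n) / (n \<bullet> n)"
  have "w = (1 / (n \<bullet> n)) *\<^sub>R ((n \<bullet> n) *\<^sub>R w)"
    using \<open>n \<bullet> n \<noteq> 0\<close> by simp
  also have "\<dots> = s *\<^sub>R snd l - t *\<^sub>R snd m"
    unfolding decomp s_def t_def by (simp add: scaleR_add_right algebra_simps)
  finally have "fst l + s *\<^sub>R snd l = fst m + t *\<^sub>R snd m"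
    unfolding w_def by (simp add: algebra_simps)
  then show "meets l m"
    unfolding meets_def by blast
qed

lemma satisfies_iff_triple_product:
  assumes "cross3 (snd g) (snd l) \<noteq> 0"
  shows "satisfies l g \<longleftrightarrow> 0 \<le> (fst g - fst l) \<bullet> cross3 (snd g) (snd l)"
proof -
  define n where "n = cross3 (snd g) (snd l)"
  have nn: "n \<bullet> n > 0"
    using assms n_def by simp
  have shifted: "meets (fst l + c *\<^sub>R n, snd l) g \<longleftrightarrow> (fst g - fst l) \<bullet> n = c * (n \<bullet> n)" for c
    using meets_iff_triple_product[of g "(fst l + c *\<^sub>R n, snd l)"] assms n_def
    by (simp add: inner_diff_left algebra_simps)
  have "passes_right l g \<longleftrightarrow> (\<exists>c>0. meets (fst l + c *\<^sub>R n, snd l) g)"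
    unfolding passes_right_def parallel_def n_def using assms by simp
  also have "\<dots> \<longleftrightarrow> (\<exists>c>0. (fst g - fst l) \<bullet> n = c * (n \<bullet> n))"
    unfolding shifted ..
  also have "\<dots> \<longleftrightarrow> 0 < (fst g - fst l) \<bullet> n"
    using nn by (auto intro!: exI[of _ "((fst g - fst l) \<bullet> n) / (n \<bullet> n)"])
  finally show ?thesis
    unfolding satisfies_def meets_iff_triple_product[OF assms] n_def by auto
qed

lemma meets_reparametrize:
  assumes "c \<noteq> 0"
  shows "meets (p + t *\<^sub>R d, c *\<^sub>R d) m \<longleftrightarrow> meets (p, d) m"
proof
  assume "meets (p + t *\<^sub>R d, c *\<^sub>R d) m"
  then obtain s r where "p + t *\<^sub>R d + s *\<^sub>R (c *\<^sub>R d) = fst m + r *\<^sub>R snd m"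
    unfolding meets_def by auto
  then have "p + (t + s * c) *\<^sub>R d = fst m + r *\<^sub>R snd m"
    by (simp add: algebra_simps)
  then show "meets (p, d) m"
    unfolding meets_def by auto
next
  assume "meets (p, d) m"
  then obtain s r where "p + s *\<^sub>R d = fst m + r *\<^sub>R snd m"
    unfolding meets_def by auto
  moreover have "p + t *\<^sub>R d + ((s - t) / c) *\<^sub>R (c *\<^sub>R d) = p + s *\<^sub>R d"
    using assms by (simp add: scaleR_diff_left)
  ultimately show "meets (p + t *\<^sub>R d, c *\<^sub>R d) m"
    unfolding meets_def by (metis fst_conv snd_conv)
qed

lemma satisfies_cong_same_oline:
  assumes "same_oline l m"
  shows "satisfies m g \<longleftrightarrow> satisfies l g"
proof -
  obtain p d where l: "l = (p, d)"
    by (cases l)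
  obtain c t where c: "c > 0" and "snd m = c *\<^sub>R d" and "fst m - p = t *\<^sub>R d"
    using assms unfolding same_oline_def l by auto
  then have m: "m = (p + t *\<^sub>R d, c *\<^sub>R d)"
    by (simp add: prod_eq_iff algebra_simps)
  have shifted: "meets (fst m + k *\<^sub>R cross3 (snd g) (snd m), snd m) g \<longleftrightarrow>
        meets (fst l + (k * c) *\<^sub>R cross3 (snd g) (snd l), snd l) g" for k
  proof -
    have "(fst m + k *\<^sub>R cross3 (snd g) (snd m), snd m) =
          ((fst l + (k * c) *\<^sub>R cross3 (snd g) (snd l)) + t *\<^sub>R d, c *\<^sub>R d)"
      unfolding m l by (simp add: cross_mult_right algebra_simps)
    then show ?thesis
      using meets_reparametrize c l by (metis order_less_irrefl snd_conv)
  qed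
  have rescale: "(\<exists>k>0. P (k * c)) \<longleftrightarrow> (\<exists>k>0. P k)" for P
  proof
    show "\<exists>k>0. P k" if "\<exists>k>0. P (k * c)"
      using that c mult_pos_pos by blast
  next
    assume "\<exists>k>0. P k"
    then obtain k where "k > 0" "P k"
      by blast
    then have "k / c > 0" "P ((k / c) * c)"
      using c by simp_all
    then show "\<exists>k>0. P (k * c)"
      by blast
  qed
  have "parallel g m \<longleftrightarrow> parallel g l"
    unfolding parallel_def m l using c by (simp add: cross_mult_right)
  then have "passes_right m g \<longleftrightarrow> passes_right l g"
    unfolding passes_right_def shifted
    using rescale[of "\<lambda>k. meets (fst l + k *\<^sub>R cross3 (snd g) (snd l), snd l) g"] by simp
  moreover have "meets m g \<longleftrightarrow> meets l g"
    unfolding m l using c meets_reparametrize by (metis order_less_irrefl)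
  ultimately show ?thesis
    unfolding satisfies_def by simp
qed

lemma same_oline_trans:
  assumes "same_oline l m" and "same_oline m k"
  shows "same_oline l k"
proof -
  obtain c1 t1 where "c1 > 0" "snd m = c1 *\<^sub>R snd l" "fst m - fst l = t1 *\<^sub>R snd l"
    using assms(1) unfolding same_oline_def by blast
  moreover obtain c2 t2 where "c2 > 0" "snd k = c2 *\<^sub>R snd m" "fst k - fst m = t2 *\<^sub>R snd m"
    using assms(2) unfolding same_oline_def by blast
  ultimately have "c2 * c1 > 0" "snd k = (c2 * c1) *\<^sub>R snd l"
    "fst k - fst l = (t1 + t2 * c1) *\<^sub>R snd l"
    by (auto simp: algebra_simps diff_eq_eq)
  then show ?thesis
    unfolding same_oline_def by blast
qed

lemma same_oline_canon:
  assumes "is_oline l"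
  shows "same_oline l (canon l)"
proof -
  have n: "norm (snd l) > 0"
    using assms unfolding is_oline_def by simp
  define u where "u = (1 / norm (snd l)) *\<^sub>R snd l"
  have "canon l = (fst l - (fst l \<bullet> u) *\<^sub>R u, u)"
    unfolding canon_def u_def Let_def by simp
  moreover have "fst l - (fst l \<bullet> u) *\<^sub>R u - fst l = (- (fst l \<bullet> u) / norm (snd l)) *\<^sub>R snd l"
    unfolding u_def by simp
  ultimately show ?thesis
    unfolding same_oline_def using n by (metis divide_pos_pos fst_conv snd_conv u_def zero_less_one)
qed

section \<open>A chart around ell0\<close>

definition chart_line :: "real^4 \<Rightarrow> oline" where
  "chart_line y = (vector [y$1, y$2, 0], vector [y$3 - y$1, y$4 - y$2, 1])"

definition chart_coords :: "oline \<Rightarrow> real^4" where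
  "chart_coords l = (let q = fst l; u = snd l in
     vector [q$1 - q$3 * u$1 / u$3, q$2 - q$3 * u$2 / u$3,
             q$1 - q$3 * u$1 / u$3 + u$1 / u$3, q$2 - q$3 * u$2 / u$3 + u$2 / u$3])"

definition chart_det :: "real^4 \<Rightarrow> real" where
  "chart_det y = y$1 * y$4 - y$2 * y$3"

definition chart_form :: "real \<times> real \<times> real \<Rightarrow> real^4 \<Rightarrow> real" where
  "chart_form g y = - (normal g \<bullet> y) + snd (snd g) * chart_det y"

lemma vector_4 [simp]:
  "(vector [a, b, c, d] :: ('a::zero)^4) $ 1 = a"
  "(vector [a, b, c, d] :: ('a::zero)^4) $ 2 = b"
  "(vector [a, b, c, d] :: ('a::zero)^4) $ 3 = c"
  "(vector [a, b, c, d] :: ('a::zero)^4) $ 4 = d"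
  unfolding vector_def by simp_all

lemma triple_product_chart_line:
  "(fst (gcon g) - fst (chart_line y)) \<bullet> cross3 (snd (gcon g)) (snd (chart_line y)) = chart_form g y"
  by (cases g) (simp add: gcon_def chart_line_def chart_form_def chart_det_def normal_def cross3_def
      inner_vec_def sum_3 sum_4 algebra_simps)

lemma gcon_chart_line_not_parallel:
  assumes "(snd (snd g))\<^sup>2 * ((y$3 - y$1)\<^sup>2 + (y$4 - y$2)\<^sup>2) < 1"
  shows "cross3 (snd (gcon g)) (snd (chart_line y)) \<noteq> 0"
proof
  obtain lam \<alpha> \<delta> where g: "g = (lam, \<alpha>, \<delta>)"
    by (cases g) auto
  assume "cross3 (snd (gcon g)) (snd (chart_line y)) = 0"
  then have "sin \<alpha> = \<delta> * (y$4 - y$2)" "cos \<alpha> = \<delta> * (y$3 - y$1)"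
    unfolding g gcon_def chart_line_def cross3_def vec_eq_iff forall_3 by auto
  then have "(\<delta> * (y$4 - y$2))\<^sup>2 + (\<delta> * (y$3 - y$1))\<^sup>2 = 1"
    using sin_cos_squared_add[of \<alpha>] by simp
  moreover have "\<delta>\<^sup>2 * ((y$3 - y$1)\<^sup>2 + (y$4 - y$2)\<^sup>2)
      = (\<delta> * (y$4 - y$2))\<^sup>2 + (\<delta> * (y$3 - y$1))\<^sup>2"
    by (simp add: power2_eq_square algebra_simps)
  ultimately have "\<delta>\<^sup>2 * ((y$3 - y$1)\<^sup>2 + (y$4 - y$2)\<^sup>2) = 1"
    by simp
  then show False
    using assms g by simp
qed

lemma satisfies_chart_line_iff:
  assumes "\<bar>snd (snd g)\<bar> \<le> M" and "M > 0" and "norm y < 1 / (3 * M)"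
  shows "satisfies (chart_line y) (gcon g) \<longleftrightarrow> 0 \<le> chart_form g y"
proof -
  have "\<bar>y$i\<bar> \<le> norm y" for i
    by (rule component_le_norm_cart)
  then have "\<bar>y$3 - y$1\<bar> \<le> 2 * norm y" "\<bar>y$4 - y$2\<bar> \<le> 2 * norm y"
    by (smt (verit) abs_triangle_ineq4)+
  then have "(y$3 - y$1)\<^sup>2 \<le> (2 * norm y)\<^sup>2" "(y$4 - y$2)\<^sup>2 \<le> (2 * norm y)\<^sup>2"
    by (metis power2_abs power_mono abs_ge_zero)+
  then have "(y$3 - y$1)\<^sup>2 + (y$4 - y$2)\<^sup>2 \<le> 8 * (norm y)\<^sup>2"
    by (simp add: power_mult_distrib)
  moreover have "(snd (snd g))\<^sup>2 \<le> M\<^sup>2"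
    using assms(1) by (metis power2_abs power_mono abs_ge_zero)
  ultimately have "(snd (snd g))\<^sup>2 * ((y$3 - y$1)\<^sup>2 + (y$4 - y$2)\<^sup>2) \<le> M\<^sup>2 * (8 * (norm y)\<^sup>2)"
    by (intro mult_mono) auto
  also have "\<dots> = 8 * (M * norm y)\<^sup>2"
    by (simp add: power_mult_distrib)
  also have "\<dots> < 1"
  proof -
    have "0 \<le> M * norm y" "M * norm y < 1 / 3"
      using assms(2,3) by (simp_all add: field_simps)
    then have "(M * norm y)\<^sup>2 < (1 / 3)\<^sup>2"
      by (intro power_strict_mono) auto
    then show ?thesis
      by (simp add: power_divide)
  qed
  finally show ?thesis
    using satisfies_iff_triple_product[OF gcon_chart_line_not_parallel] triple_product_chart_line
    by simp
qed

lemma chart_line_same_ell0_iff: "same_oline (chart_line y) ell0 \<longleftrightarrow> y = 0"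
proof
  assume "same_oline (chart_line y) ell0"
  then obtain c t where
    c: "(vector [0, 0, 1] :: real^3) = c *\<^sub>R (vector [y$3 - y$1, y$4 - y$2, 1] :: real^3)" and
    t: "- (vector [y$1, y$2, 0] :: real^3) = t *\<^sub>R (vector [y$3 - y$1, y$4 - y$2, 1] :: real^3)"
    unfolding same_oline_def chart_line_def ell0_def by auto
  from c have "c = 1" "y$3 = y$1" "y$4 = y$2"
    unfolding vec_eq_iff forall_3 by auto
  moreover from t have "t = 0"
    unfolding vec_eq_iff forall_3 by auto
  ultimately show "y = 0"
    using t unfolding vec_eq_iff forall_3 forall_4 by auto
next
  assume "y = 0"
  then have "snd ell0 = 1 *\<^sub>R snd (chart_line y)" "fst ell0 - fst (chart_line y) = 0 *\<^sub>R snd (chart_line y)"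
    by (simp_all add: chart_line_def ell0_def vec_eq_iff forall_3)
  then show "same_oline (chart_line y) ell0"
    unfolding same_oline_def by (metis zero_less_one)
qed

lemma is_oline_chart_line: "is_oline (chart_line y)"
  by (simp add: is_oline_def chart_line_def vec_eq_iff forall_3)

lemma ell0_satisfies_gcon: "satisfies ell0 (gcon g)"
proof -
  obtain lam \<alpha> \<delta> where g: "g = (lam, \<alpha>, \<delta>)"
    by (cases g) auto
  have "fst ell0 + lam *\<^sub>R snd ell0 = fst (gcon g) + 0 *\<^sub>R snd (gcon g)"
    unfolding ell0_def g gcon_def vec_eq_iff forall_3 by simp
  then show ?thesis
    unfolding satisfies_def meets_def by blast
qed

lemma same_oline_chart_line_chart_coords:
  assumes "snd l $ 3 > 0"
  shows "same_oline l (chart_line (chart_coords l))"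
proof -
  obtain q u where l: "l = (q, u)"
    by (cases l)
  have u3: "u$3 > 0"
    using assms l by simp
  have "snd (chart_line (chart_coords l)) = (1 / u$3) *\<^sub>R u"
    "fst (chart_line (chart_coords l)) - fst l = (- q$3 / u$3) *\<^sub>R u"
    using u3 by (simp_all add: l chart_coords_def chart_line_def vec_eq_iff forall_3)
  then show ?thesis
    unfolding same_oline_def using u3 l by (metis divide_pos_pos fst_conv snd_conv zero_less_one)
qed

lemma norm_vector_3: "norm (vector [a, b, c] :: real^3) = sqrt (a\<^sup>2 + b\<^sup>2 + c\<^sup>2)"
  by (simp add: norm_vec_def L2_set_def sum_3)

lemma continuous_vector_3:
  fixes f g h :: "'a::t2_space \<Rightarrow> real"
  assumes "continuous F f" "continuous F g" "continuous F h"
  shows "continuous F (\<lambda>x. vector [f x, g x, h x] :: real^3)"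
proof -
  have "(\<lambda>x. vector [f x, g x, h x] :: real^3)
      = (\<lambda>x. f x *\<^sub>R axis 1 1 + g x *\<^sub>R axis 2 1 + h x *\<^sub>R axis 3 1)"
    by (auto simp: vec_eq_iff forall_3 axis_def)
  then show ?thesis
    using assms by (simp add: continuous_intros)
qed

lemma continuous_vector_4:
  fixes f g h k :: "'a::t2_space \<Rightarrow> real"
  assumes "continuous F f" "continuous F g" "continuous F h" "continuous F k"
  shows "continuous F (\<lambda>x. vector [f x, g x, h x, k x] :: real^4)"
proof -
  have "(\<lambda>x. vector [f x, g x, h x, k x] :: real^4)
      = (\<lambda>x. f x *\<^sub>R axis 1 1 + g x *\<^sub>R axis 2 1 + h x *\<^sub>R axis 3 1 + k x *\<^sub>R axis 4 1)"
    by (auto simp: vec_eq_iff forall_4 axis_def)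
  then show ?thesis
    using assms by (simp add: continuous_intros)
qed

lemma canon_ell0: "canon ell0 = ell0"
  by (simp add: canon_def ell0_def norm_vector_3)

lemma canon_chart_line_0: "canon (chart_line 0) = ell0"
  by (simp add: canon_def chart_line_def ell0_def norm_vector_3 vec_eq_iff forall_3 inner_vec_def sum_3)

lemma chart_line_near_ell0:
  assumes "\<epsilon> > 0"
  obtains \<eta> where "\<eta> > 0" "\<And>y. norm y < \<eta> \<Longrightarrow> dist (canon (chart_line y)) (canon ell0) < \<epsilon>"
proof -
  have "continuous (at 0) (\<lambda>y. canon (chart_line y))"
    unfolding canon_def Let_def chart_line_def
    by (intro continuous_intros continuous_vector_3) (auto simp: norm_vector_3)
  then obtain \<eta> where "\<eta> > 0" "\<And>y. dist y 0 < \<eta> \<Longrightarrow> dist (canon (chart_line y)) ell0 < \<epsilon>"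
    using assms unfolding continuous_at_eps_delta canon_chart_line_0 by blast
  then show ?thesis
    using that by (simp add: canon_ell0)
qed

lemma line_near_ell0_in_chart:
  assumes "\<eta> > 0"
  obtains \<epsilon> where "\<epsilon> > 0" and "\<And>l. is_oline l \<Longrightarrow> dist (canon l) (canon ell0) < \<epsilon> \<Longrightarrow>
     same_oline l (chart_line (chart_coords (canon l))) \<and> norm (chart_coords (canon l)) < \<eta>"
proof -
  have "continuous (at ell0) chart_coords"
    unfolding chart_coords_def Let_def ell0_def
    by (intro continuous_intros continuous_vector_4) auto
  moreover have "chart_coords ell0 = 0"
    by (simp add: chart_coords_def ell0_def vec_eq_iff forall_4)
  ultimately obtain d where d: "d > 0"
    "\<And>x. dist x ell0 < d \<Longrightarrow> norm (chart_coords x) < \<eta>"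
    using assms unfolding continuous_at_eps_delta by (metis dist_0_norm dist_commute)
  show ?thesis
  proof (rule that[of "min d (1/2)"])
    fix l assume l: "is_oline l" and "dist (canon l) (canon ell0) < min d (1/2)"
    then have close: "dist (canon l) ell0 < min d (1/2)"
      by (simp add: canon_ell0)
    have "\<bar>snd (canon l) $ 3 - 1\<bar> \<le> dist (snd (canon l)) (snd ell0)"
      using component_le_norm_cart[of "snd (canon l) - snd ell0" 3]
      by (simp add: dist_norm ell0_def)
    also have "\<dots> \<le> dist (canon l) ell0"
      by (rule dist_snd_le)
    finally have "snd (canon l) $ 3 > 0"
      using close by (simp add: abs_le_iff)
    then show "same_oline l (chart_line (chart_coords (canon l))) \<and> norm (chart_coords (canon l)) < \<eta>"
      using same_oline_trans[OF same_oline_canon[OF l] same_oline_chart_line_chart_coords] d close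
      by simp
  qed (use d in simp)
qed

definition local_pins :: "(real \<times> real \<times> real) set \<Rightarrow> bool" where
  "local_pins G \<longleftrightarrow> (\<exists>\<eta>>0. \<forall>y. norm y < \<eta> \<and> (\<forall>g\<in>G. 0 \<le> chart_form g y) \<longrightarrow> y = 0)"

lemma satisfies_chart_line_iff_near_0:
  assumes "finite G"
  obtains \<eta> where "\<eta> > 0"
    and "\<And>g y. g \<in> G \<Longrightarrow> norm y < \<eta> \<Longrightarrow> satisfies (chart_line y) (gcon g) \<longleftrightarrow> 0 \<le> chart_form g y"
proof -
  define M where "M = (\<Sum>g\<in>G. \<bar>snd (snd g)\<bar>) + 1"
  have "M > 0"
    unfolding M_def by (simp add: sum_nonneg add_nonneg_pos)
  have "\<bar>snd (snd g)\<bar> \<le> M" if "g \<in> G" for g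
  proof -
    have "\<bar>snd (snd g)\<bar> \<le> (\<Sum>g\<in>G. \<bar>snd (snd g)\<bar>)"
      using assms that by (intro member_le_sum) auto
    then show ?thesis
      unfolding M_def by simp
  qed
  then show ?thesis
    using that[of "1 / (3 * M)"] satisfies_chart_line_iff[of _ M] \<open>M > 0\<close> by simp
qed

lemma local_pins_of_pins:
  assumes "finite G" and "pins (gcon ` G)"
  shows "local_pins G"
proof -
  obtain \<epsilon> where "\<epsilon> > 0" and pinned: "\<And>l. is_oline l \<Longrightarrow> dist (canon l) (canon ell0) < \<epsilon> \<Longrightarrow>
      \<forall>g\<in>G. satisfies l (gcon g) \<Longrightarrow> same_oline l ell0"
    using assms(2) unfolding pins_def by blast
  obtain \<eta> where "\<eta> > 0" and near: "\<And>y. norm y < \<eta> \<Longrightarrow> dist (canon (chart_line y)) (canon ell0) < \<epsilon>"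
    using chart_line_near_ell0[OF \<open>\<epsilon> > 0\<close>] by blast
  obtain \<eta>' where "\<eta>' > 0" and satisfies_iff: "\<And>g y. g \<in> G \<Longrightarrow> norm y < \<eta>' \<Longrightarrow>
      satisfies (chart_line y) (gcon g) \<longleftrightarrow> 0 \<le> chart_form g y"
    using satisfies_chart_line_iff_near_0[OF assms(1)] by blast
  have "y = 0" if "norm y < min \<eta> \<eta>'" and "\<forall>g\<in>G. 0 \<le> chart_form g y" for y
    using pinned[OF is_oline_chart_line near] satisfies_iff that chart_line_same_ell0_iff by simp
  moreover have "min \<eta> \<eta>' > 0"
    using \<open>\<eta> > 0\<close> \<open>\<eta>' > 0\<close> by simp
  ultimately show ?thesis
    unfolding local_pins_def by blast
qed

lemma pins_of_local_pins:
  assumes "finite G" and "local_pins G"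
  shows "pins (gcon ` G)"
proof -
  obtain \<eta> where "\<eta> > 0" and pinned: "\<And>y. norm y < \<eta> \<Longrightarrow> \<forall>g\<in>G. 0 \<le> chart_form g y \<Longrightarrow> y = 0"
    using assms(2) unfolding local_pins_def by blast
  obtain \<eta>' where "\<eta>' > 0" and satisfies_iff: "\<And>g y. g \<in> G \<Longrightarrow> norm y < \<eta>' \<Longrightarrow>
      satisfies (chart_line y) (gcon g) \<longleftrightarrow> 0 \<le> chart_form g y"
    using satisfies_chart_line_iff_near_0[OF assms(1)] by blast
  obtain \<epsilon> where "\<epsilon> > 0" and in_chart: "\<And>l. is_oline l \<Longrightarrow> dist (canon l) (canon ell0) < \<epsilon> \<Longrightarrow>
      same_oline l (chart_line (chart_coords (canon l))) \<and> norm (chart_coords (canon l)) < min \<eta> \<eta>'"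
    using line_near_ell0_in_chart[of "min \<eta> \<eta>'"] \<open>\<eta> > 0\<close> \<open>\<eta>' > 0\<close> by auto
  have "same_oline l ell0"
    if "is_oline l" "dist (canon l) (canon ell0) < \<epsilon>" "\<forall>g\<in>G. satisfies l (gcon g)" for l
  proof -
    define y where "y = chart_coords (canon l)"
    have same: "same_oline l (chart_line y)" and small: "norm y < min \<eta> \<eta>'"
      using in_chart that unfolding y_def by blast+
    have "satisfies (chart_line y) (gcon g)" if "g \<in> G" for g
      using \<open>\<forall>g\<in>G. satisfies l (gcon g)\<close> that satisfies_cong_same_oline[OF same] by blast
    then have "\<forall>g\<in>G. 0 \<le> chart_form g y"
      using satisfies_iff small by simp
    then have "y = 0"
      using pinned small by simp
    then show ?thesis
      using same_oline_trans[OF same] chart_line_same_ell0_iff by blast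
  qed
  then show ?thesis
    unfolding pins_def using \<open>\<epsilon> > 0\<close> ell0_satisfies_gcon by blast
qed

lemma pins_iff_local_pins:
  assumes "finite G"
  shows "pins (gcon ` G) \<longleftrightarrow> local_pins G"
  using local_pins_of_pins pins_of_local_pins assms by blast

section \<open>Orthogonalized families\<close>

lemma chart_form_orth: "chart_form (orth g) y = - (normal g \<bullet> y)"
  by (cases g) (simp add: chart_form_def orth_def normal_def)

lemma local_pins_orth_iff:
  "local_pins (orth ` F) \<longleftrightarrow> (\<forall>y. (\<forall>g\<in>F. normal g \<bullet> y \<le> 0) \<longrightarrow> y = 0)"
proof
  assume "local_pins (orth ` F)"
  then obtain \<eta> where "\<eta> > 0" and pinned: "\<And>y. norm y < \<eta> \<Longrightarrow> \<forall>g\<in>F. normal g \<bullet> y \<le> 0 \<Longrightarrow> y = 0"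
    unfolding local_pins_def by (auto simp: chart_form_orth)
  show "\<forall>y. (\<forall>g\<in>F. normal g \<bullet> y \<le> 0) \<longrightarrow> y = 0"
  proof (intro allI impI)
    fix y assume y: "\<forall>g\<in>F. normal g \<bullet> y \<le> 0"
    define t where "t = \<eta> / (2 * (norm y + 1))"
    have "t > 0"
      using \<open>\<eta> > 0\<close> unfolding t_def by (simp add: add_nonneg_pos)
    have "norm (t *\<^sub>R y) = \<eta> * (norm y / (2 * (norm y + 1)))"
      using \<open>\<eta> > 0\<close> unfolding t_def by simp
    also have "\<dots> < \<eta> * 1"
      using \<open>\<eta> > 0\<close> by (intro mult_strict_left_mono) (simp_all add: add_nonneg_pos)
    finally have "norm (t *\<^sub>R y) < \<eta>"
      by simp
    moreover have "\<forall>g\<in>F. normal g \<bullet> (t *\<^sub>R y) \<le> 0"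
      using y \<open>t > 0\<close> by (simp add: mult_nonneg_nonpos)
    ultimately have "t *\<^sub>R y = 0"
      using pinned by blast
    then show "y = 0"
      using \<open>t > 0\<close> by simp
  qed
next
  assume "\<forall>y. (\<forall>g\<in>F. normal g \<bullet> y \<le> 0) \<longrightarrow> y = 0"
  then show "local_pins (orth ` F)"
    unfolding local_pins_def by (auto simp: chart_form_orth intro: exI[of _ 1])
qed

lemma inner_uniformly_positive:
  fixes V :: "'a::euclidean_space set"
  assumes "finite V" and positive: "\<And>y. y \<noteq> 0 \<Longrightarrow> \<exists>v\<in>V. 0 < v \<bullet> y"
  obtains c where "c > 0" and "\<And>y. \<exists>v\<in>V. c * norm y \<le> v \<bullet> y"
proof -
  define h where "h y = (\<Sum>v\<in>V. max 0 (v \<bullet> y))" for y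
  have "continuous_on (sphere 0 1) h"
    unfolding h_def by (intro continuous_intros)
  moreover have "sphere (0::'a) 1 \<noteq> {}"
    by (simp add: sphere_eq_empty)
  ultimately obtain y0 where y0: "y0 \<in> sphere 0 1" and min: "\<And>y. y \<in> sphere 0 1 \<Longrightarrow> h y0 \<le> h y"
    using continuous_attains_inf[OF compact_sphere] by blast
  have "y0 \<noteq> 0"
    using y0 by auto
  then obtain v0 where "v0 \<in> V" "0 < v0 \<bullet> y0"
    using positive by blast
  then have "h y0 > 0"
    unfolding h_def using assms(1) by (intro sum_pos2[where i=v0]) auto
  have "card V > 0"
    using \<open>v0 \<in> V\<close> assms(1) card_gt_0_iff by blast
  define c where "c = h y0 / card V"
  have "c > 0"
    unfolding c_def using \<open>h y0 > 0\<close> \<open>card V > 0\<close> by simp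
  have "\<exists>v\<in>V. c * norm y \<le> v \<bullet> y" for y
  proof (cases "y = 0")
    case True
    then show ?thesis
      using \<open>v0 \<in> V\<close> by auto
  next
    case False
    define z where "z = (1 / norm y) *\<^sub>R y"
    have "h y0 \<le> h z"
      using min False unfolding z_def by simp
    then obtain v where "v \<in> V" "c \<le> max 0 (v \<bullet> z)"
      using sum_bounded_above_strict[of V "\<lambda>v. max 0 (v \<bullet> z)" c] \<open>card V > 0\<close>
      unfolding h_def c_def by (force simp: not_le)
    then have "c \<le> v \<bullet> z"
      using \<open>c > 0\<close> by linarith
    then have "norm y * c \<le> norm y * (v \<bullet> z)"
      by (simp add: mult_left_mono)
    then show ?thesis
      using \<open>v \<in> V\<close> False unfolding z_def by (auto simp: mult.commute)
  qed
  then show ?thesis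
    using that \<open>c > 0\<close> by blast
qed

lemma abs_chart_det_le: "\<bar>chart_det y\<bar> \<le> 2 * (norm y)\<^sup>2"
proof -
  have c: "\<bar>y$i\<bar> \<le> norm y" for i
    by (rule component_le_norm_cart)
  have "\<bar>y$1 * y$4\<bar> \<le> norm y * norm y" "\<bar>y$2 * y$3\<bar> \<le> norm y * norm y"
    unfolding abs_mult by (intro mult_mono c; simp)+
  then show ?thesis
    unfolding chart_det_def by (simp add: power2_eq_square)
qed

lemma chart_form_neg_of_linear_part_dominates:
  assumes "c * norm y \<le> normal g \<bullet> y" and "\<bar>snd (snd g)\<bar> \<le> M"
    and "norm y * (2 * M + 1) < c" and "y \<noteq> 0"
  shows "chart_form g y < 0"
proof -
  have "0 \<le> M"
    using assms(2) abs_ge_zero order_trans by blast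
  have "snd (snd g) * chart_det y \<le> \<bar>snd (snd g)\<bar> * \<bar>chart_det y\<bar>"
    by (metis abs_ge_self abs_mult)
  also have "\<dots> \<le> M * (2 * (norm y)\<^sup>2)"
    using assms(2) abs_chart_det_le[of y] \<open>0 \<le> M\<close> by (intro mult_mono) auto
  also have "\<dots> = norm y * (norm y * (2 * M))"
    by (simp add: power2_eq_square algebra_simps)
  also have "\<dots> < norm y * c"
  proof -
    have "norm y * (2 * M) < c"
      using assms(3) norm_ge_zero[of y] by (simp add: algebra_simps; linarith)
    then show ?thesis
      using assms(4) by (simp add: mult_strict_left_mono)
  qed
  finally show ?thesis
    unfolding chart_form_def using assms(1) by (simp add: mult.commute)
qed

lemma local_pins_of_orth:
  assumes "finite F" and "local_pins (orth ` F)"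
  shows "local_pins F"
proof -
  have "\<exists>v\<in>normal ` F. 0 < v \<bullet> y" if "y \<noteq> 0" for y
    using assms(2) that unfolding local_pins_orth_iff by (meson not_le image_eqI)
  then obtain c where "c > 0" and "\<And>y. \<exists>v\<in>normal ` F. c * norm y \<le> v \<bullet> y"
    using inner_uniformly_positive[of "normal ` F"] assms(1) by blast
  then have linear_part: "\<exists>g\<in>F. c * norm y \<le> normal g \<bullet> y" for y
    by blast
  define M where "M = (\<Sum>g\<in>F. \<bar>snd (snd g)\<bar>)"
  have "M \<ge> 0"
    unfolding M_def by (simp add: sum_nonneg)
  have M: "\<bar>snd (snd g)\<bar> \<le> M" if "g \<in> F" for g
    unfolding M_def using assms(1) that by (intro member_le_sum) auto
  have "y = 0" if "norm y < c / (2 * M + 1)" and "\<forall>g\<in>F. 0 \<le> chart_form g y" for y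
  proof (rule ccontr)
    assume "y \<noteq> 0"
    obtain g where "g \<in> F" and "c * norm y \<le> normal g \<bullet> y"
      using linear_part by blast
    moreover have "norm y * (2 * M + 1) < c"
      using that(1) \<open>M \<ge> 0\<close> by (simp add: pos_less_divide_eq)
    ultimately have "chart_form g y < 0"
      using chart_form_neg_of_linear_part_dominates[OF _ M[OF \<open>g \<in> F\<close>] _ \<open>y \<noteq> 0\<close>] by blast
    then show False
      using that(2) \<open>g \<in> F\<close> by auto
  qed
  moreover have "c / (2 * M + 1) > 0"
    using \<open>c > 0\<close> \<open>M \<ge> 0\<close> by simp
  ultimately show ?thesis
    unfolding local_pins_def by blast
qed

section \<open>Families that do not pin ell0\<close>

lemma chart_form_scaleR:
  "chart_form g (t *\<^sub>R z) = t * (- (normal g \<bullet> z) + t * (snd (snd g) * chart_det z))"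
  by (simp add: chart_form_def chart_det_def algebra_simps)

lemma not_local_pins_of_ray:
  assumes "finite G" and "z \<noteq> 0"
    and "\<forall>g\<in>G. eventually (\<lambda>t. 0 \<le> chart_form g (t *\<^sub>R z)) (at_right 0)"
  shows "\<not> local_pins G"
proof
  assume "local_pins G"
  then obtain \<eta> where "\<eta> > 0" and pinned: "\<And>y. norm y < \<eta> \<Longrightarrow> \<forall>g\<in>G. 0 \<le> chart_form g y \<Longrightarrow> y = 0"
    unfolding local_pins_def by blast
  have "((\<lambda>t. \<bar>t\<bar> * norm z) \<longlongrightarrow> \<bar>0\<bar> * norm z) (at_right 0)"
    by (intro tendsto_intros)
  then have "eventually (\<lambda>t. norm (t *\<^sub>R z) < \<eta>) (at_right 0)"
    using order_tendstoD(2)[of _ 0 _ \<eta>] \<open>\<eta> > 0\<close> by simp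
  moreover have "eventually (\<lambda>t. \<forall>g\<in>G. 0 \<le> chart_form g (t *\<^sub>R z)) (at_right 0)"
    using assms(1,3) by (simp add: eventually_ball_finite)
  ultimately have "eventually (\<lambda>t. 0 < t \<and> t *\<^sub>R z = 0) (at_right 0)"
    using eventually_at_right_less by eventually_elim (use pinned in blast)
  then obtain t where "0 < t" "t *\<^sub>R z = 0"
    using eventually_happens'[OF trivial_limit_at_right_real] by blast
  then show False
    using \<open>z \<noteq> 0\<close> by simp
qed

lemma not_local_pins_of_inner_neg:
  assumes "finite G" and "z \<noteq> 0" and "\<forall>g\<in>G. normal g \<bullet> z < 0"
  shows "\<not> local_pins G"
proof (rule not_local_pins_of_ray[OF assms(1,2)], intro ballI)
  fix g assume "g \<in> G"
  define c where "c = snd (snd g) * chart_det z"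
  have "((\<lambda>t. - (normal g \<bullet> z) + t * c) \<longlongrightarrow> - (normal g \<bullet> z) + 0 * c) (at_right 0)"
    by (intro tendsto_intros)
  moreover have "0 < - (normal g \<bullet> z)"
    using assms(3) \<open>g \<in> G\<close> by simp
  ultimately have "eventually (\<lambda>t. 0 < - (normal g \<bullet> z) + t * c) (at_right 0)"
    using order_tendstoD(1) by fastforce
  then show "eventually (\<lambda>t. 0 \<le> chart_form g (t *\<^sub>R z)) (at_right 0)"
    using eventually_at_right_less
    by eventually_elim (simp add: chart_form_scaleR c_def)
qed

lemma not_local_pins_of_chart_det_zero:
  assumes "finite G" and "z \<noteq> 0" and "chart_det z = 0" and "\<forall>g\<in>G. normal g \<bullet> z \<le> 0"
  shows "\<not> local_pins G"
proof (rule not_local_pins_of_ray[OF assms(1,2)], intro ballI)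
  fix g assume "g \<in> G"
  show "eventually (\<lambda>t. 0 \<le> chart_form g (t *\<^sub>R z)) (at_right 0)"
    using eventually_at_right_less
  proof eventually_elim
    case (elim t)
    have "normal g \<bullet> z \<le> 0"
      using assms(4) \<open>g \<in> G\<close> by blast
    then show ?case
      using elim assms(3) by (simp add: chart_form_scaleR mult_nonneg_nonpos)
  qed
qed

lemma nonzero_inner_nonpos_pair:
  fixes a b :: "'a::euclidean_space"
  assumes "2 \<le> DIM('a)"
  obtains r where "r \<noteq> 0" "a \<bullet> r \<le> 0" "b \<bullet> r \<le> 0"
proof -
  obtain r where "r \<noteq> 0" "a \<bullet> r = 0"
    using orthogonal_to_vector_exists[OF assms, of a] unfolding orthogonal_def by blast
  then show ?thesis
    using that[of r] that[of "- r"] by (cases "b \<bullet> r \<le> 0") auto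
qed

lemma nonzero_inner_nonpos_card_le_2:
  fixes B :: "'a::euclidean_space set"
  assumes "finite B" and "card B \<le> 2" and "2 \<le> DIM('a)"
  obtains r where "r \<noteq> 0" "\<forall>b\<in>B. b \<bullet> r \<le> 0"
proof -
  obtain a b where "B \<subseteq> {a, b}"
  proof (cases "B = {}")
    case False
    then obtain a where "a \<in> B"
      by blast
    have "card (B - {a}) \<le> Suc 0"
      using assms(1,2) \<open>a \<in> B\<close> by simp
    then have all_eq: "\<forall>b1\<in>B - {a}. \<forall>b2\<in>B - {a}. b1 = b2"
      using card_le_Suc0_iff_eq[of "B - {a}"] assms(1) by simp
    show ?thesis
    proof (cases "B - {a} = {}")
      case True
      then show ?thesis
        using that[of a a] by blast
    next
      case False
      then obtain b where "b \<in> B - {a}"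
        by blast
      then have "B \<subseteq> {a, b}"
        using all_eq by blast
      then show ?thesis
        by (rule that)
    qed
  qed (use that[of undefined undefined] in simp)
  moreover obtain r where "r \<noteq> 0" "a \<bullet> r \<le> 0" "b \<bullet> r \<le> 0"
    using nonzero_inner_nonpos_pair[OF assms(3)] by blast
  ultimately show ?thesis
    using that[of r] by auto
qed

lemma normal_inner_rank_one:
  "normal g \<bullet> (vector [r1 * p1, r1 * p2, r2 * p1, r2 * p2] :: real^4) =
     (sin (fst (snd g)) * p1 - cos (fst (snd g)) * p2) * ((1 - fst g) * r1 + fst g * r2)"
  by (cases g) (simp add: normal_def inner_vec_def sum_4 algebra_simps)

lemma rank_one_vector_eq_0_iff:
  "(vector [r1 * p1, r1 * p2, r2 * p1, r2 * p2] :: real^4) = 0 \<longleftrightarrow> (r1 = 0 \<and> r2 = 0) \<or> (p1 = 0 \<and> p2 = 0)"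
  by (auto simp: vec_eq_iff forall_4)

lemma not_local_pins_card_le_3:
  assumes "finite G" and "card G \<le> 3"
  shows "\<not> local_pins G"
proof -
  define g1 where "g1 = (SOME g. g \<in> G)"
  have "card (G - {g1}) \<le> 2"
  proof (cases "G = {}")
    case False
    then have "g1 \<in> G"
      unfolding g1_def by (simp add: some_in_eq)
    then show ?thesis
      using assms by simp
  qed simp
  define p1 where "p1 = cos (fst (snd g1))"
  define p2 where "p2 = sin (fst (snd g1))"
  have "p1\<^sup>2 + p2\<^sup>2 = 1"
    unfolding p1_def p2_def by simp
  \<comment> \<open>The witness z is the outer product of r and (p1, p2): its chart_det vanishes, the
    normal of g1 is orthogonal to it, and the other two constraints are half-planes for r.\<close>
  define k where "k g = sin (fst (snd g)) * p1 - cos (fst (snd g)) * p2" for g :: "real \<times> real \<times> real"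
  define a where "a g = k g *\<^sub>R (vector [1 - fst g, fst g] :: real^2)" for g
  have "card (a ` (G - {g1})) \<le> 2"
    using card_image_le[of "G - {g1}" a] assms(1) \<open>card (G - {g1}) \<le> 2\<close> by simp
  then obtain r :: "real^2" where "r \<noteq> 0" and r: "\<forall>g\<in>G - {g1}. a g \<bullet> r \<le> 0"
    using nonzero_inner_nonpos_card_le_2[of "a ` (G - {g1})"] assms(1) by auto
  define z where "z = (vector [r$1 * p1, r$1 * p2, r$2 * p1, r$2 * p2] :: real^4)"
  have normal_z: "normal g \<bullet> z = a g \<bullet> r" for g
    unfolding z_def normal_inner_rank_one a_def k_def by (simp add: inner_vec_def sum_2 algebra_simps)
  have "k g1 = 0"
    unfolding k_def p1_def p2_def by (simp add: mult.commute)
  then have "\<forall>g\<in>G. normal g \<bullet> z \<le> 0"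
    using r unfolding normal_z by (auto simp: a_def)
  moreover have "chart_det z = 0"
    unfolding z_def chart_det_def by simp
  moreover have "z \<noteq> 0"
    using \<open>r \<noteq> 0\<close> \<open>p1\<^sup>2 + p2\<^sup>2 = 1\<close> unfolding z_def rank_one_vector_eq_0_iff by (auto simp: vec_eq_iff forall_2)
  ultimately show ?thesis
    using not_local_pins_of_chart_det_zero assms(1) by blast
qed

lemma ex_inner_neg_of_independent:
  fixes V :: "'a::euclidean_space set"
  assumes "independent V"
  obtains w where "\<forall>v\<in>V. v \<bullet> w < 0"
proof -
  have "\<exists>p. (\<forall>u\<in>V - {v}. u \<bullet> p = 0) \<and> 0 < v \<bullet> p" if "v \<in> V" for v
  proof -
    obtain a p where a: "a \<in> span (V - {v})" and p: "\<And>w. w \<in> span (V - {v}) \<Longrightarrow> orthogonal p w"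
      and "v = a + p"
      using orthogonal_subspace_decomp_exists[of "V - {v}" v] by blast
    have "v \<notin> span (V - {v})"
      using assms that unfolding dependent_def by blast
    then have "p \<noteq> 0"
      using a \<open>v = a + p\<close> by auto
    moreover have "p \<bullet> a = 0"
      using p[OF a] unfolding orthogonal_def .
    ultimately have "0 < v \<bullet> p"
      using \<open>v = a + p\<close> by (simp add: inner_add_left inner_commute[of a p])
    moreover have "\<forall>u\<in>V - {v}. u \<bullet> p = 0"
      using p span_base unfolding orthogonal_def by (metis inner_commute)
    ultimately show ?thesis
      by blast
  qed
  then obtain P where P: "\<And>v. v \<in> V \<Longrightarrow> (\<forall>u\<in>V - {v}. u \<bullet> P v = 0) \<and> 0 < v \<bullet> P v"
    by metis
  have "u \<bullet> (- (\<Sum>v\<in>V. P v)) < 0" if "u \<in> V" for u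
  proof -
    have "(\<Sum>v\<in>V. u \<bullet> P v) = u \<bullet> P u + (\<Sum>v\<in>V - {u}. u \<bullet> P v)"
      using finiteI_independent[OF assms] that by (simp add: sum.remove)
    also have "(\<Sum>v\<in>V - {u}. u \<bullet> P v) = 0"
      using P that by (intro sum.neutral) auto
    finally show ?thesis
      using P that by (simp add: inner_sum_right)
  qed
  then show ?thesis
    using that by blast
qed

lemma ex_inner_neg_of_active_independent:
  fixes V :: "'a::euclidean_space set"
  assumes "finite V" and "\<forall>v\<in>V. v \<bullet> y \<le> 0" and "independent {v\<in>V. v \<bullet> y = 0}"
  obtains z where "\<forall>v\<in>V. v \<bullet> z < 0"
proof -
  obtain w where w: "\<forall>v\<in>{v\<in>V. v \<bullet> y = 0}. v \<bullet> w < 0"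
    using ex_inner_neg_of_independent[OF assms(3)] by blast
  have "eventually (\<lambda>s. v \<bullet> (y + s *\<^sub>R w) < 0) (at_right 0)" if "v \<in> V" for v
  proof (cases "v \<bullet> y = 0")
    case True
    with w that have "v \<bullet> w < 0"
      by blast
    show ?thesis
      using eventually_at_right_less
      by eventually_elim (use True \<open>v \<bullet> w < 0\<close> in \<open>simp add: inner_add_right mult_pos_neg\<close>)
  next
    case False
    then have "v \<bullet> y < 0"
      using assms(2) that by force
    moreover have "((\<lambda>s. v \<bullet> y + s * (v \<bullet> w)) \<longlongrightarrow> v \<bullet> y + 0 * (v \<bullet> w)) (at_right 0)"
      by (intro tendsto_intros)
    ultimately show ?thesis
      using order_tendstoD(2) by (fastforce simp: inner_add_right)
  qed
  then have "eventually (\<lambda>s. \<forall>v\<in>V. v \<bullet> (y + s *\<^sub>R w) < 0) (at_right 0)"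
    using assms(1) by (simp add: eventually_ball_finite)
  then show ?thesis
    using eventually_happens'[OF trivial_limit_at_right_real] that by blast
qed

lemma independent_active_normals:
  assumes "finite F" and "4 \<le> card F" and "\<forall>S\<subseteq>F. card S = 4 \<longrightarrow> \<not> dependent_family S"
    and "y \<noteq> 0"
  shows "independent (normal ` {g\<in>F. normal g \<bullet> y = 0})"
proof -
  define A where "A = {g\<in>F. normal g \<bullet> y = 0}"
  have "A \<subseteq> F" "finite A"
    using assms(1) unfolding A_def by auto
  have "card A < 4"
  proof (rule ccontr)
    assume "\<not> card A < 4"
    then obtain S where "S \<subseteq> A" "card S = 4"
      by (meson not_less obtain_subset_with_card_n)
    then have "inj_on normal S" "independent (normal ` S)"
      using assms(3) \<open>A \<subseteq> F\<close> unfolding dependent_family_def by auto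
    then have "card (normal ` S) = DIM(real^4)"
      using \<open>card S = 4\<close> by (simp add: card_image)
    then have "y \<in> span (normal ` S)"
      using card_ge_dim_independent[OF subset_UNIV \<open>independent (normal ` S)\<close>] by auto
    moreover have "\<forall>v\<in>normal ` S. orthogonal y v"
      using \<open>S \<subseteq> A\<close> unfolding A_def orthogonal_def by (auto simp: inner_commute)
    ultimately have "orthogonal y y"
      using orthogonal_to_span by blast
    then show False
      using assms(4) by (simp add: orthogonal_def)
  qed
  then obtain B where "B \<subseteq> F - A" "card B = 4 - card A"
    using assms(2) card_Diff_subset[OF \<open>finite A\<close> \<open>A \<subseteq> F\<close>] by (metis diff_le_mono obtain_subset_with_card_n)
  moreover have "finite B"
    using \<open>B \<subseteq> F - A\<close> assms(1) finite_subset by blast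
  ultimately have "card (A \<union> B) = 4" "A \<union> B \<subseteq> F"
    using \<open>card A < 4\<close> \<open>finite A\<close> \<open>A \<subseteq> F\<close> card_Un_disjoint[of A B] by auto
  then have "independent (normal ` (A \<union> B))"
    using assms(3) unfolding dependent_family_def by blast
  then show ?thesis
    unfolding A_def[symmetric] by (rule independent_mono) auto
qed

lemma local_pins_orth_of_local_pins:
  assumes "finite F" and "\<forall>S\<subseteq>F. card S = 4 \<longrightarrow> \<not> dependent_family S" and "local_pins F"
  shows "local_pins (orth ` F)"
proof (rule ccontr)
  assume "\<not> local_pins (orth ` F)"
  then obtain y where "y \<noteq> 0" and y: "\<forall>g\<in>F. normal g \<bullet> y \<le> 0"
    unfolding local_pins_orth_iff by blast
  show False
  proof (cases "card F \<le> 3")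
    case True
    then show False
      using not_local_pins_card_le_3 assms(1,3) by blast
  next
    case False
    have "{v\<in>normal ` F. v \<bullet> y = 0} = normal ` {g\<in>F. normal g \<bullet> y = 0}"
      by auto
    then obtain z where z: "\<forall>v\<in>normal ` F. v \<bullet> z < 0"
      using ex_inner_neg_of_active_independent[of "normal ` F" y] y assms(1,2) \<open>y \<noteq> 0\<close> False
        independent_active_normals[of F y] by auto
    moreover have "F \<noteq> {}"
      using False by auto
    ultimately have "z \<noteq> 0"
      by auto
    then show False
      using not_local_pins_of_inner_neg[of F z] z assms(1,3) by auto
  qed
qed

theorem lemma25:
  fixes F :: "(real \<times> real \<times> real) set"
  assumes "finite F"
    and "\<forall>(lam, \<alpha>, \<delta>)\<in>F. 0 \<le> \<alpha> \<and> \<alpha> < 2 * pi"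
  shows "(pins (gcon ` orth ` F) \<longrightarrow> pins (gcon ` F))
     \<and> (pins (gcon ` F) \<and> (\<forall>S\<subseteq>F. card S = 4 \<longrightarrow> \<not> dependent_family S)
          \<longrightarrow> pins (gcon ` orth ` F))"
proof -
  have "pins (gcon ` orth ` F) \<longleftrightarrow> local_pins (orth ` F)"
    using assms(1) by (simp add: pins_iff_local_pins)
  moreover have "pins (gcon ` F) \<longleftrightarrow> local_pins F"
    using assms(1) by (rule pins_iff_local_pins)
  ultimately show ?thesis
    using local_pins_of_orth[OF assms(1)] local_pins_orth_of_local_pins[OF assms(1)] by blast
qed

end
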